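(* Let $p$ be a polynomial of degree at most $2$, $s$ a polynomial of degree at most $1$, and $\eta$ a polynomial of degree exactly $1$ with root $\xi$. Put $$\kappa_0=p(\xi)\eta''(\xi)+\tfrac12p'(\xi)\eta'(\xi)-s(\xi)\eta'(\xi),\qquad \kappa_1=2p(\xi)\eta'(\xi),$$ and assume $(\kappa_0,\kappa_1)\neq(0,0)$. Let $\widehat T$ be the natural-form operator $$\widehat T[y]=p\,y''+\Big(\frac{p'}{2}+s-\frac{2p\eta'}{\eta}\Big)y'+\Big(\frac{p\eta''}{\eta}+\Big(\frac{p'}{2}-s\Big)\frac{\eta'}{\eta}\Big)y,$$ and suppose there is $d\in\{0,1\}$ such that for each $j\in\mathbb N_0\setminus\{d\}$ there is a polynomial eigenfunction $\widehat y_j$ of $\widehat T$ of degree exactly $j$. For $n\ge1$ let $\mathcal E_n=\operatorname{span}\{\widehat y_j: 0\le j\le n,\ j\neq d\}$ and $$\mathcal F_n=\{P\in\mathcal P_n:\ \kappa_1P'(\xi)-\kappa_0P(\xi)=0\},$$ where $\mathcal P_n$ is the space of (real) polynomials of degree at most $n$. Then $\mathcal E_n=\mathcal F_n$ for all $n\ge1$.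
   Context: The condition $\kappa_1P'(\xi)-\kappa_0P(\xi)=0$, i.e. $\big[2p\eta'P'-\big(p\eta''+\tfrac12p'\eta'-s\eta'\big)P\big]\big|_{x=\xi}=0$, is called the exceptional condition, and $\xi$ the exceptional root. This is the $X_1$ (codimension one) situation, covering the $X_1$ Laguerre polynomials of Types I, II (missing degree $d=0$), Type III (missing degree $d=1$), and the $X_1$ Jacobi polynomials ($d=0$). *)

theory Defs
  imports "HOL-Computational_Algebra.Polynomial"
begin

text \<open>The natural-form operator, evaluated pointwise at x (meaningful where eta x \<noteq> 0).\<close>
definition natT :: "real poly \<Rightarrow> real poly \<Rightarrow> real poly \<Rightarrow> real poly \<Rightarrow> real \<Rightarrow> real" where
  "natT p s eta y x =
     poly p x * poly (pderiv (pderiv y)) x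
   + (poly (pderiv p) x / 2 + poly s x - 2 * poly p x * poly (pderiv eta) x / poly eta x)
       * poly (pderiv y) x
   + (poly p x * poly (pderiv (pderiv eta)) x / poly eta x
       + (poly (pderiv p) x / 2 - poly s x) * poly (pderiv eta) x / poly eta x) * poly y x"

definition is_eigenpoly :: "real poly \<Rightarrow> real poly \<Rightarrow> real poly \<Rightarrow> real poly \<Rightarrow> bool" where
  "is_eigenpoly p s eta y \<longleftrightarrow> y \<noteq> 0 \<and>
     (\<exists>lam::real. \<forall>x. poly eta x \<noteq> 0 \<longrightarrow> natT p s eta y x = lam * poly y x)"

definition poly_span :: "(nat \<Rightarrow> real poly) \<Rightarrow> nat set \<Rightarrow> real poly set" where
  "poly_span y J = {P. \<exists>c::nat \<Rightarrow> real. P = (\<Sum>j\<in>J. smult (c j) (y j))}"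

definition kappa0 :: "real poly \<Rightarrow> real poly \<Rightarrow> real poly \<Rightarrow> real \<Rightarrow> real" where
  "kappa0 p s eta \<xi> = poly p \<xi> * poly (pderiv (pderiv eta)) \<xi>
     + 1/2 * poly (pderiv p) \<xi> * poly (pderiv eta) \<xi> - poly s \<xi> * poly (pderiv eta) \<xi>"

definition kappa1 :: "real poly \<Rightarrow> real poly \<Rightarrow> real \<Rightarrow> real" where
  "kappa1 p eta \<xi> = 2 * poly p \<xi> * poly (pderiv eta) \<xi>"

end

theory Submission
  imports Defs
begin

text \<open>Every eigenpolynomial satisfies the exceptional condition: clearing the denominator eta
  in the eigenvalue equation gives a polynomial identity whose value at the root \<xi> is
  \<open>\<kappa>\<^sub>1 y'(\<xi>) - \<kappa>\<^sub>0 y(\<xi>)\<close>. Hence the span is contained in the kernel.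
  Conversely, the kernel contains no nonzero polynomial of degree d: a nonzero constant in it
  forces \<open>\<kappa>\<^sub>0 = 0\<close>, after which a polynomial of degree one in it forces \<open>\<kappa>\<^sub>1 = 0\<close>, and the
  kernel does contain the eigenpolynomial of degree \<open>1 - d\<close>. So the nonzero elements of the
  kernel of degree at most n have exactly the degrees of the given eigenpolynomials, and
  cancelling leading coefficients one degree at a time writes each of them in their span.\<close>

definition exceptional_value :: "real \<Rightarrow> real \<Rightarrow> real \<Rightarrow> real poly \<Rightarrow> real" where
  "exceptional_value k0 k1 \<xi> P = k1 * poly (pderiv P) \<xi> - k0 * poly P \<xi>"

lemma exceptional_value_diff_smult:
  "exceptional_value k0 k1 \<xi> (P - smult r Y) = exceptional_value k0 k1 \<xi> P - r * exceptional_value k0 k1 \<xi> Y"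
  by (simp add: exceptional_value_def pderiv_diff pderiv_smult algebra_simps)

lemma exceptional_value_sum_smult:
  "exceptional_value k0 k1 \<xi> (\<Sum>j\<in>J. smult (c j) (y j)) = (\<Sum>j\<in>J. c j * exceptional_value k0 k1 \<xi> (y j))"
  using higher_pderiv_sum[of 1 "\<lambda>j. smult (c j) (y j)" J]
  by (simp add: exceptional_value_def poly_sum pderiv_smult sum_distrib_left algebra_simps sum_subtractf)

lemma exceptional_value_degree_le_1:
  assumes "degree P \<le> 1"
  shows "exceptional_value k0 k1 \<xi> P = k1 * coeff P 1 - k0 * (coeff P 0 + \<xi> * coeff P 1)"
proof -
  have P: "P = [:coeff P 0, coeff P 1:]"
    by (rule poly_eqI) (use assms in \<open>auto simp: coeff_pCons split: nat.split intro!: coeff_eq_0\<close>)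
  have "exceptional_value k0 k1 \<xi> [:b, a:] = k1 * a - k0 * (b + \<xi> * a)" for a b
    by (simp add: exceptional_value_def pderiv_pCons)
  from this[of "coeff P 0" "coeff P 1"] show ?thesis
    unfolding P[symmetric] .
qed

lemma exceptional_value_trivial_if_kernel_has_degrees_0_1:
  assumes A: "A \<noteq> 0" "degree A = 0" "exceptional_value k0 k1 \<xi> A = 0"
    and B: "degree B = 1" "exceptional_value k0 k1 \<xi> B = 0"
  shows "k0 = 0 \<and> k1 = 0"
proof -
  have "coeff A 0 \<noteq> 0"
    using A(1,2) by (metis leading_coeff_0_iff)
  moreover have "coeff A 1 = 0"
    using A(2) by (simp add: coeff_eq_0)
  ultimately have "k0 = 0"
    using A(3) exceptional_value_degree_le_1[of A] A(2) by simp
  moreover have "coeff B 1 \<noteq> 0"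
    using B(1) by (metis leading_coeff_0_iff degree_0 zero_neq_one)
  ultimately show ?thesis
    using B exceptional_value_degree_le_1[of B] by simp
qed

lemma exceptional_kernel_avoids_degree:
  assumes k: "(k0, k1) \<noteq> (0, 0)" and "d \<in> {0, 1}"
    and Y: "Y \<noteq> 0" "degree Y = 1 - d" "exceptional_value k0 k1 \<xi> Y = 0"
    and P: "P \<noteq> 0" "exceptional_value k0 k1 \<xi> P = 0"
  shows "degree P \<noteq> d"
proof
  assume "degree P = d"
  with \<open>d \<in> {0, 1}\<close> consider "degree P = 0" "degree Y = 1" | "degree Y = 0" "degree P = 1"
    using Y(2) by auto
  then show False
    using exceptional_value_trivial_if_kernel_has_degrees_0_1 P Y k by cases (metis, metis)
qed

lemma poly_eq_0_if_vanishes_off_roots: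
  fixes G q :: "'a::{idom, ring_char_0} poly"
  assumes "q \<noteq> 0" and "\<And>x. poly q x \<noteq> 0 \<Longrightarrow> poly G x = 0"
  shows "G = 0"
proof -
  have "poly (G * q) x = 0" for x
    using assms(2) by (cases "poly q x = 0") simp_all
  then have "G * q = 0"
    using poly_all_0_iff_0 by blast
  with assms(1) show ?thesis by simp
qed

lemma is_eigenpoly_exceptional:
  assumes "eta \<noteq> 0" and "poly eta \<xi> = 0" and "is_eigenpoly p s eta Y"
  shows "exceptional_value (kappa0 p s eta \<xi>) (kappa1 p eta \<xi>) \<xi> Y = 0"
proof -
  obtain lam where lam: "\<And>x. poly eta x \<noteq> 0 \<Longrightarrow> natT p s eta Y x = lam * poly Y x"
    using assms(3) unfolding is_eigenpoly_def by blast
  define G where "G = eta * p * pderiv (pderiv Y) + (smult (1/2) (pderiv p) + s) * eta * pderiv Y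
     - smult 2 (p * pderiv eta * pderiv Y)
     + (p * pderiv (pderiv eta) + (smult (1/2) (pderiv p) - s) * pderiv eta) * Y
     - smult lam (eta * Y)"
  have "poly G x = 0" if "poly eta x \<noteq> 0" for x
  proof -
    have "poly G x = poly eta x * natT p s eta Y x - poly eta x * (lam * poly Y x)"
      unfolding G_def natT_def using that by (simp add: field_simps)
    with lam[OF that] show ?thesis by simp
  qed
  then have "G = 0"
    using poly_eq_0_if_vanishes_off_roots assms(1) by blast
  then have "poly G \<xi> = 0" by simp
  then show ?thesis
    using assms(2) unfolding G_def kappa0_def kappa1_def exceptional_value_def by (simp add: algebra_simps)
qed

lemma zero_in_poly_span: "0 \<in> poly_span y J"
  unfolding poly_span_def by (intro CollectI exI[of _ "\<lambda>_. 0"]) simp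

lemma poly_span_add_smult:
  assumes "finite J" and "Q \<in> poly_span y J" and "j \<in> J"
  shows "Q + smult r (y j) \<in> poly_span y J"
proof -
  obtain c where c: "Q = (\<Sum>i\<in>J. smult (c i) (y i))"
    using assms(2) unfolding poly_span_def by blast
  define c' where "c' i = c i + (if i = j then r else 0)" for i
  have "Q + smult r (y j) = (\<Sum>i\<in>J. smult (c' i) (y i))"
    using c assms(1,3) unfolding c'_def
    by (simp add: smult_add_left sum.distrib if_distrib[of "\<lambda>t. smult t _"] sum.delta' cong: if_cong)
  then show ?thesis
    unfolding poly_span_def by blast
qed

lemma degree_poly_span_le:
  assumes "finite J" and "\<And>j. j \<in> J \<Longrightarrow> degree (y j) \<le> n" and "P \<in> poly_span y J"
  shows "degree P \<le> n"
proof -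
  obtain c where "P = (\<Sum>j\<in>J. smult (c j) (y j))"
    using assms(3) unfolding poly_span_def by blast
  then show ?thesis
    using assms(1,2) by (auto intro!: degree_sum_le order.trans[OF degree_smult_le])
qed

lemma exceptional_value_poly_span:
  assumes "\<And>j. j \<in> J \<Longrightarrow> exceptional_value k0 k1 \<xi> (y j) = 0" and "P \<in> poly_span y J"
  shows "exceptional_value k0 k1 \<xi> P = 0"
proof -
  obtain c where "P = (\<Sum>j\<in>J. smult (c j) (y j))"
    using assms(2) unfolding poly_span_def by blast
  then show ?thesis
    using assms(1) by (simp add: exceptional_value_sum_smult)
qed

lemma in_poly_span_by_degree:
  assumes "finite J" and nonzero: "\<And>j. j \<in> J \<Longrightarrow> y j \<noteq> 0"
    and deg: "\<And>j. j \<in> J \<Longrightarrow> degree (y j) = j"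
    and closed: "\<And>P r j. V P \<Longrightarrow> j \<in> J \<Longrightarrow> V (P - smult r (y j))"
    and degree_in: "\<And>P. V P \<Longrightarrow> P \<noteq> 0 \<Longrightarrow> degree P \<in> J"
    and "V P"
  shows "P \<in> poly_span y J"
  using \<open>V P\<close>
proof (induction "degree P" arbitrary: P rule: less_induct)
  case less
  show ?case
  proof (cases "P = 0")
    case True
    then show ?thesis using zero_in_poly_span by simp
  next
    case False
    define m where "m = degree P"
    have m: "m \<in> J" "degree (y m) = m"
      using degree_in[OF less.prems False] deg unfolding m_def by auto
    have "lead_coeff (y m) \<noteq> 0"
      using nonzero[OF m(1)] by simp
    define r where "r = lead_coeff P / lead_coeff (y m)"
    define Q where "Q = P - smult r (y m)"
    have "V Q"
      unfolding Q_def using closed less.prems m(1) by blast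
    have "Q \<in> poly_span y J"
    proof (cases "Q = 0")
      case True
      then show ?thesis using zero_in_poly_span by simp
    next
      case False
      have "degree Q < m"
      proof (rule degree_less_if_less_eqI[of Q "y m", simplified m(2)])
        show "degree Q \<le> m"
          unfolding Q_def using degree_diff_le[of P m] degree_smult_le[of r "y m"] m(2)
          by (simp add: m_def)
        show "coeff Q m = 0"
          unfolding Q_def r_def using m(2) \<open>lead_coeff (y m) \<noteq> 0\<close> by (simp add: m_def)
      qed (fact False)
      then show ?thesis
        using less.hyps \<open>V Q\<close> unfolding m_def by blast
    qed
    from poly_span_add_smult[OF \<open>finite J\<close> this m(1), of r] show ?thesis
      unfolding Q_def by simp
  qed
qed

lemma exceptional_kernel_eq_poly_span:
  assumes "(k0, k1) \<noteq> (0, 0)" and "d \<in> {0, 1}"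
    and y: "\<And>j. j \<noteq> d \<Longrightarrow> y j \<noteq> 0 \<and> degree (y j) = j \<and> exceptional_value k0 k1 \<xi> (y j) = 0"
  shows "poly_span y {j. j \<le> n \<and> j \<noteq> d} = {P. degree P \<le> n \<and> exceptional_value k0 k1 \<xi> P = 0}"
    (is "poly_span y ?J = {P. ?V P}")
proof (intro set_eqI iffI, unfold mem_Collect_eq)
  have "finite ?J" by simp
  show "?V P" if "P \<in> poly_span y ?J" for P
    using degree_poly_span_le[OF \<open>finite ?J\<close> _ that] exceptional_value_poly_span[OF _ that] y
    by simp
  show "P \<in> poly_span y ?J" if "?V P" for P
  proof (rule in_poly_span_by_degree[where V = ?V])
    show "?V (Q - smult r (y j))" if "?V Q" "j \<in> ?J" for Q r j
      using that y[of j] degree_diff_le[of Q n] degree_smult_le[of r "y j"]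
      by (simp add: exceptional_value_diff_smult)
    have "1 - d \<noteq> d" using assms(2) by auto
    then have Y: "y (1 - d) \<noteq> 0" "degree (y (1 - d)) = 1 - d"
      "exceptional_value k0 k1 \<xi> (y (1 - d)) = 0"
      using y by blast+
    show "degree Q \<in> ?J" if "?V Q" "Q \<noteq> 0" for Q
      using exceptional_kernel_avoids_degree[OF assms(1,2) Y that(2) that(1)[THEN conjunct2]] that(1)
      by simp
  qed (use \<open>finite ?J\<close> that y in auto)
qed

theorem lemma4p1:
  fixes p s eta :: "real poly" and \<xi> :: real and d n :: nat and y :: "nat \<Rightarrow> real poly"
  assumes "degree p \<le> 2" and "degree s \<le> 1" and "degree eta = 1" and "poly eta \<xi> = 0"
    and "(kappa0 p s eta \<xi>, kappa1 p eta \<xi>) \<noteq> (0, 0)"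
    and "d \<in> {0, 1}"
    and "\<forall>j. j \<noteq> d \<longrightarrow> degree (y j) = j \<and> is_eigenpoly p s eta (y j)"
    and "n \<ge> 1"
  shows "poly_span y {j. j \<le> n \<and> j \<noteq> d} =
         {P. degree P \<le> n \<and>
             kappa1 p eta \<xi> * poly (pderiv P) \<xi> - kappa0 p s eta \<xi> * poly P \<xi> = 0}"
proof -
  have "eta \<noteq> 0" using assms(3) by auto
  have "y j \<noteq> 0 \<and> degree (y j) = j
        \<and> exceptional_value (kappa0 p s eta \<xi>) (kappa1 p eta \<xi>) \<xi> (y j) = 0" if "j \<noteq> d" for j
    using assms(7) that is_eigenpoly_exceptional[OF \<open>eta \<noteq> 0\<close> assms(4)]
    unfolding is_eigenpoly_def by auto
  from exceptional_kernel_eq_poly_span[OF assms(5,6) this] show ?thesis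
    unfolding exceptional_value_def .
qed

end
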